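(* Let RV (Range Voting) be the voting rule that, on any profile, elects an alternative maximizing the social welfare of the voters of that profile. In any district-based election with $m$ alternatives, $n$ voters and $k$ districts using RV in every district, for any election winner $a$, $$\frac{\max_{j}\mathrm{SW}(j\mid\mathbf v)}{\mathrm{SW}(a\mid\mathbf v)}\le \begin{cases} 1+\dfrac{mk}{2} & \text{(symmetric)},\\[2mm] 1+\dfrac{m}{2}\left(\dfrac{n+\max_{d}n_d}{\min_{d}n_d}-1\right) & \text{(unweighted)},\\[2mm] 1+m\left(\dfrac{n}{\min_{d}n_d}-1\right) & \text{(unrestricted)}. \end{cases}$$
   Context: A district-based election consists of a set $\mathcal M$ of $m\ge 2$ alternatives, a set $\mathcal N$ of $n$ voters, a partition $\mathcal D$ of $\mathcal N$ into $k$ nonempty districts (district $d$ has $n_d$ voters), positive weights $w_d>0$, and a valuation profile $\mathbf v$ with $v_{ij}\ge0$ and $\sum_j v_{ij}=1$ for every voter $i$. In each district $d$ the local winner $j_d$ is the output of the voting rule on the subprofile of voters in $d$ (local ties broken arbitrarily); the election winner is any alternative in $\arg\max_j\sum_d w_d\mathbf 1[j=j_d]$. $\mathrm{SW}(j\mid\mathbf v)=\sum_i v_{ij}$. Symmetric: $n_d=n/k$, $w_d=1$; unweighted: $w_d=1$; unrestricted: arbitrary sizes and positive weights. *)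

theory Defs
  imports Complex_Main "HOL-Library.Disjoint_Sets"
begin

definition SW :: "'v set \<Rightarrow> ('v \<Rightarrow> 'a \<Rightarrow> real) \<Rightarrow> 'a \<Rightarrow> real" where
  "SW V v j = (\<Sum>i\<in>V. v i j)"

definition RV_winner :: "'a set \<Rightarrow> 'v set \<Rightarrow> ('v \<Rightarrow> 'a \<Rightarrow> real) \<Rightarrow> 'a \<Rightarrow> bool" where
  "RV_winner M V v j \<longleftrightarrow> j \<in> M \<and> (\<forall>j'\<in>M. SW V v j' \<le> SW V v j)"

definition district_score :: "'v set set \<Rightarrow> ('v set \<Rightarrow> real) \<Rightarrow> ('v set \<Rightarrow> 'a) \<Rightarrow> 'a \<Rightarrow> real" where
  "district_score D w loc j = (\<Sum>d\<in>D. w d * (if j = loc d then 1 else 0))"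

definition election_winner :: "'a set \<Rightarrow> 'v set set \<Rightarrow> ('v set \<Rightarrow> real) \<Rightarrow> ('v set \<Rightarrow> 'a) \<Rightarrow> 'a \<Rightarrow> bool" where
  "election_winner M D w loc a \<longleftrightarrow>
     a \<in> M \<and> (\<forall>j\<in>M. district_score D w loc j \<le> district_score D w loc a)"

definition valid_profile :: "'a set \<Rightarrow> 'v set \<Rightarrow> ('v \<Rightarrow> 'a \<Rightarrow> real) \<Rightarrow> bool" where
  "valid_profile M N v \<longleftrightarrow> (\<forall>i\<in>N. (\<forall>j\<in>M. 0 \<le> v i j) \<and> (\<Sum>j\<in>M. v i j) = 1)"

end

theory Submission
  imports Defs
begin

text \<open>Let \<open>b\<close> be any alternative and \<open>a\<close> the election winner. In a district won by \<open>a\<close>,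
  RV gives \<open>SW\<^sub>d(b) \<le> SW\<^sub>d(a)\<close>, and since the \<open>m\<close> welfares of a district sum to its size,
  \<open>SW\<^sub>d(a) \<ge> n\<^sub>d/m\<close>. In any other district \<open>SW\<^sub>d(b) \<le> n\<^sub>d\<close>, and even \<open>SW\<^sub>d(b) \<le> n\<^sub>d/2\<close>
  unless \<open>b\<close> itself wins there. Summing, with \<open>n\<^sub>A\<close> the number of voters in districts won
  by \<open>a\<close>, gives \<open>SW(b) \<le> SW(a) + (n - n\<^sub>A)\<close> and \<open>SW(a) \<ge> n\<^sub>A/m\<close>, so the ratio is at most
  \<open>1 + m (n/n\<^sub>A - 1)\<close> with \<open>n\<^sub>A \<ge> min\<^sub>d n\<^sub>d\<close>. With unit weights \<open>b\<close> wins no more districts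
  than \<open>a\<close>, which bounds the voters in districts won by \<open>b\<close> by \<open>n\<^sub>A max\<^sub>d n\<^sub>d / min\<^sub>d n\<^sub>d\<close>
  and yields the sharper halved bound.\<close>

lemma valid_profile_subset:
  "valid_profile M N v \<Longrightarrow> V \<subseteq> N \<Longrightarrow> valid_profile M V v"
  unfolding valid_profile_def by blast

lemma SW_nonneg: "valid_profile M V v \<Longrightarrow> j \<in> M \<Longrightarrow> 0 \<le> SW V v j"
  unfolding SW_def valid_profile_def by (auto intro!: sum_nonneg)

lemma sum_SW_eq_card:
  assumes "valid_profile M V v"
  shows "(\<Sum>j\<in>M. SW V v j) = real (card V)"
proof -
  have "(\<Sum>j\<in>M. SW V v j) = (\<Sum>i\<in>V. \<Sum>j\<in>M. v i j)"
    unfolding SW_def by (rule sum.swap)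
  also have "\<dots> = (\<Sum>i\<in>V. 1)"
    using assms unfolding valid_profile_def by (intro sum.cong) auto
  finally show ?thesis by simp
qed

lemma SW_add_le_card:
  assumes "valid_profile M V v" "finite M" "j \<in> M" "j' \<in> M" "j \<noteq> j'"
  shows "SW V v j + SW V v j' \<le> real (card V)"
proof -
  have "SW V v j + SW V v j' = (\<Sum>x\<in>{j, j'}. SW V v x)" using assms(5) by simp
  also have "\<dots> \<le> (\<Sum>x\<in>M. SW V v x)"
    using assms by (intro sum_mono2) (auto intro: SW_nonneg)
  finally show ?thesis using sum_SW_eq_card[OF assms(1)] by simp
qed

lemma SW_le_card:
  assumes "valid_profile M V v" "finite M" "j \<in> M"
  shows "SW V v j \<le> real (card V)"
proof -
  have "SW V v j = (\<Sum>x\<in>{j}. SW V v x)" by simp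
  also have "\<dots> \<le> (\<Sum>x\<in>M. SW V v x)"
    using assms by (intro sum_mono2) (auto intro: SW_nonneg)
  finally show ?thesis using sum_SW_eq_card[OF assms(1)] by simp
qed

lemma card_le_card_mult_SW_RV_winner:
  assumes "valid_profile M V v" "RV_winner M V v j"
  shows "real (card V) \<le> real (card M) * SW V v j"
proof -
  have "(\<Sum>x\<in>M. SW V v x) \<le> (\<Sum>x\<in>M. SW V v j)"
    using assms(2) unfolding RV_winner_def by (intro sum_mono) auto
  then show ?thesis using sum_SW_eq_card[OF assms(1)] by simp
qed

lemma RV_winner_SW_le:
  assumes "valid_profile M V v" "finite M" "RV_winner M V v j" "a \<in> M" "b \<in> M"
  shows "SW V v b \<le> SW V v a + (if j = a then 0 else real (card V))"
  using assms SW_le_card[OF assms(1,2,5)] SW_nonneg[OF assms(1,4)]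
  unfolding RV_winner_def by auto

lemma RV_winner_SW_le_half:
  assumes "valid_profile M V v" "finite M" "RV_winner M V v j" "a \<in> M" "b \<in> M"
  shows "SW V v b \<le> SW V v a
           + ((if j = b then real (card V) else 0) + (if j = a then 0 else real (card V))) / 2"
proof -
  have "j \<in> M" and best: "SW V v b \<le> SW V v j"
    using assms(3,5) unfolding RV_winner_def by auto
  then have "j \<noteq> b \<Longrightarrow> SW V v b + SW V v j \<le> real (card V)"
    using SW_add_le_card[OF assms(1,2,5)] by auto
  then show ?thesis
    using best SW_le_card[OF assms(1,2,5)] SW_nonneg[OF assms(1,4)] by auto
qed

lemma ratio_le_of_excess:
  fixes S T n\<^sub>A m X :: real
  assumes "0 < m" "0 < n\<^sub>A" "n\<^sub>A \<le> m * S" "T \<le> S + X" "0 \<le> X"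
  shows "T / S \<le> 1 + m * X / n\<^sub>A"
proof -
  have "0 < m * S" using assms(2,3) by linarith
  then have S: "0 < S" using assms(1) by (simp add: zero_less_mult_iff)
  have "T / S \<le> (S + X) / S" using S assms(4) by (simp add: divide_right_mono)
  also have "\<dots> = 1 + X / S" using S by (simp add: field_simps)
  also have "X / S \<le> X / (n\<^sub>A / m)"
    using assms S by (intro divide_left_mono) (auto simp: field_simps)
  finally show ?thesis by (simp add: mult.commute)
qed

locale RV_district_election =
  fixes M :: "'a set" and N :: "'v set" and D :: "'v set set"
    and w :: "'v set \<Rightarrow> real" and v :: "'v \<Rightarrow> 'a \<Rightarrow> real"
    and loc :: "'v set \<Rightarrow> 'a" and a :: 'a
  assumes finite_M: "finite M"
    and finite_N: "finite N" and N_nonempty: "N \<noteq> {}"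
    and partition: "partition_on N D"
    and weights_pos: "\<forall>d\<in>D. w d > 0"
    and valid: "valid_profile M N v"
    and local_RV: "\<forall>d\<in>D. RV_winner M d v (loc d)"
    and winner: "election_winner M D w loc a"
begin

lemma finite_D: "finite D"
  using finite_elements[OF finite_N partition] .

lemma D_nonempty: "D \<noteq> {}"
  using partition_onD1[OF partition] N_nonempty by auto

lemma district_subset: "d \<in> D \<Longrightarrow> d \<subseteq> N"
  using partition_onD1[OF partition] by auto

lemma finite_district: "d \<in> D \<Longrightarrow> finite d"
  using district_subset finite_N finite_subset by blast

lemma valid_district: "d \<in> D \<Longrightarrow> valid_profile M d v"
  using valid_profile_subset[OF valid district_subset] .

lemma winner_in_M: "a \<in> M"
  using winner unfolding election_winner_def by auto

lemma local_winner_in_M: "d \<in> D \<Longrightarrow> loc d \<in> M"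
  using local_RV unfolding RV_winner_def by auto

lemma sum_districts_eq:
  fixes f :: "'v \<Rightarrow> real"
  shows "(\<Sum>i\<in>N. f i) = (\<Sum>d\<in>D. \<Sum>i\<in>d. f i)"
proof -
  have "(\<Sum>i\<in>N. f i) = (\<Sum>i\<in>\<Union>D. f i)"
    using partition_onD1[OF partition] by simp
  also have "\<dots> = (\<Sum>d\<in>D. \<Sum>i\<in>d. f i)"
    using partition_onD2[OF partition] finite_district
    by (subst sum.Union_disjoint) (auto simp: disjoint_def)
  finally show ?thesis .
qed

lemma SW_eq_sum_districts: "SW N v j = (\<Sum>d\<in>D. SW d v j)"
  unfolding SW_def by (rule sum_districts_eq)

lemma card_eq_sum_districts: "real (card N) = (\<Sum>d\<in>D. real (card d))"
  using sum_districts_eq[of "\<lambda>_. 1"] by simp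

lemma Min_card_districts_pos: "0 < Min (card ` D)"
  using finite_D D_nonempty finite_district partition_onD3[OF partition]
  by (auto simp: card_gt_0_iff)

definition won_voters :: "'a \<Rightarrow> real" where
  "won_voters j = (\<Sum>d\<in>D. if loc d = j then real (card d) else 0)"

lemma lost_voters_eq: "(\<Sum>d\<in>D. if loc d = j then 0 else real (card d)) = real (card N) - won_voters j"
  unfolding won_voters_def card_eq_sum_districts sum_subtractf[symmetric]
  by (intro sum.cong) auto

lemma won_voters_nonneg: "0 \<le> won_voters j"
  unfolding won_voters_def by (intro sum_nonneg) auto

lemma won_voters_le_card: "won_voters j \<le> real (card N)"
  using lost_voters_eq[of j] sum_nonneg[of D "\<lambda>d. if loc d = j then 0 else real (card d)"]
  by (simp add: if_split_asm)

lemma winner_wins_some_district: "\<exists>d\<in>D. loc d = a"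
proof (rule ccontr)
  assume "\<not> ?thesis"
  then have "district_score D w loc a = 0"
    unfolding district_score_def by (intro sum.neutral) auto
  moreover obtain d where d: "d \<in> D" using D_nonempty by auto
  then have "w d * (if loc d = loc d then 1 else 0) \<le> district_score D w loc (loc d)"
    unfolding district_score_def using finite_D weights_pos by (intro member_le_sum) auto
  moreover have "district_score D w loc (loc d) \<le> district_score D w loc a"
    using winner local_winner_in_M[OF d] unfolding election_winner_def by auto
  ultimately show False using weights_pos d by fastforce
qed

lemma Min_card_districts_le_won_voters: "real (Min (card ` D)) \<le> won_voters a"
proof -
  obtain d where d: "d \<in> D" "loc d = a" using winner_wins_some_district by blast
  have "Min (card ` D) \<le> card d" using finite_D d(1) by simp
  moreover have "(if loc d = a then real (card d) else 0) \<le> won_voters a"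
    unfolding won_voters_def using finite_D d by (intro member_le_sum) auto
  ultimately show ?thesis using d(2) by simp
qed

lemma won_voters_winner_pos: "0 < won_voters a"
  using Min_card_districts_pos Min_card_districts_le_won_voters by linarith

lemma card_M_pos: "0 < real (card M)"
  using finite_M winner_in_M card_gt_0_iff by fastforce

lemma won_voters_le_card_M_mult_SW: "won_voters a \<le> real (card M) * SW N v a"
  unfolding won_voters_def SW_eq_sum_districts sum_distrib_left
proof (intro sum_mono)
  fix d assume d: "d \<in> D"
  show "(if loc d = a then real (card d) else 0) \<le> real (card M) * SW d v a"
    using card_le_card_mult_SW_RV_winner[OF valid_district[OF d]] local_RV d
      SW_nonneg[OF valid_district[OF d] winner_in_M]
    by auto
qed

lemma SW_le_plus_lost_voters:
  assumes "b \<in> M"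
  shows "SW N v b \<le> SW N v a + (real (card N) - won_voters a)"
proof -
  have "SW N v b \<le> (\<Sum>d\<in>D. SW d v a + (if loc d = a then 0 else real (card d)))"
    unfolding SW_eq_sum_districts using local_RV assms winner_in_M
    by (intro sum_mono RV_winner_SW_le[OF valid_district finite_M]) auto
  then show ?thesis
    by (simp only: sum.distrib lost_voters_eq SW_eq_sum_districts)
qed

lemma SW_le_plus_half_voters:
  assumes "b \<in> M"
  shows "SW N v b \<le> SW N v a + (won_voters b + real (card N) - won_voters a) / 2"
proof -
  have "SW N v b \<le> (\<Sum>d\<in>D. SW d v a
          + ((if loc d = b then real (card d) else 0) + (if loc d = a then 0 else real (card d))) / 2)"
    unfolding SW_eq_sum_districts using local_RV assms winner_in_M
    by (intro sum_mono RV_winner_SW_le_half[OF valid_district finite_M]) auto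
  then show ?thesis
    by (simp only: sum.distrib sum_divide_distrib[symmetric] lost_voters_eq
        SW_eq_sum_districts won_voters_def[symmetric]) (simp add: algebra_simps)
qed

lemma district_score_unweighted:
  assumes "\<forall>d\<in>D. w d = 1"
  shows "district_score D w loc j = real (card {d\<in>D. loc d = j})"
proof -
  have "district_score D w loc j = (\<Sum>d\<in>D. if loc d = j then 1 else 0)"
    unfolding district_score_def using assms by (intro sum.cong) auto
  also have "\<dots> = (\<Sum>d\<in>{d\<in>D. loc d = j}. 1)"
    using finite_D by (rule sum.inter_filter[symmetric])
  finally show ?thesis by simp
qed

lemma won_voters_bounds:
  "real (card {d\<in>D. loc d = j}) * real (Min (card ` D)) \<le> won_voters j"
  "won_voters j \<le> real (card {d\<in>D. loc d = j}) * real (Max (card ` D))"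
proof -
  have count: "real (card {d\<in>D. loc d = j}) * c = (\<Sum>d\<in>D. if loc d = j then c else 0)" for c
    using finite_D by (simp add: sum.inter_filter[symmetric])
  show "real (card {d\<in>D. loc d = j}) * real (Min (card ` D)) \<le> won_voters j"
    unfolding count won_voters_def using finite_D by (intro sum_mono) auto
  show "won_voters j \<le> real (card {d\<in>D. loc d = j}) * real (Max (card ` D))"
    unfolding count won_voters_def using finite_D by (intro sum_mono) auto
qed

lemma won_voters_unweighted:
  assumes "\<forall>d\<in>D. w d = 1" "b \<in> M"
  shows "won_voters b * real (Min (card ` D)) \<le> real (Max (card ` D)) * won_voters a"
proof -
  let ?min = "real (Min (card ` D))" and ?max = "real (Max (card ` D))"
    and ?c\<^sub>a = "real (card {d\<in>D. loc d = a})"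
  have "card {d\<in>D. loc d = b} \<le> card {d\<in>D. loc d = a}"
    using winner assms(2) unfolding election_winner_def district_score_unweighted[OF assms(1)]
    by auto
  then have "won_voters b \<le> ?c\<^sub>a * ?max"
    using won_voters_bounds(2)[of b] by (meson mult_right_mono of_nat_0_le_iff of_nat_mono order_trans)
  then have "won_voters b * ?min \<le> ?c\<^sub>a * ?max * ?min"
    by (rule mult_right_mono) simp
  also have "\<dots> = ?max * (?c\<^sub>a * ?min)"
    by (simp only: ac_simps)
  also have "\<dots> \<le> ?max * won_voters a"
    by (rule mult_left_mono[OF won_voters_bounds(1)]) simp
  finally show ?thesis .
qed

theorem ratio_unrestricted:
  assumes "b \<in> M"
  shows "SW N v b / SW N v a \<le> 1 + real (card M) * (real (card N) / real (Min (card ` D)) - 1)"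
proof -
  have "SW N v b / SW N v a \<le> 1 + real (card M) * (real (card N) - won_voters a) / won_voters a"
    using won_voters_le_card[of a]
    by (intro ratio_le_of_excess[OF card_M_pos won_voters_winner_pos won_voters_le_card_M_mult_SW
          SW_le_plus_lost_voters[OF assms]]) simp
  also have "\<dots> = 1 + real (card M) * (real (card N) / won_voters a - 1)"
    using won_voters_winner_pos by (simp add: field_simps)
  also have "real (card N) / won_voters a \<le> real (card N) / real (Min (card ` D))"
    using Min_card_districts_pos Min_card_districts_le_won_voters by (intro divide_left_mono) auto
  finally show ?thesis using card_M_pos by simp
qed

theorem ratio_unweighted:
  assumes "\<forall>d\<in>D. w d = 1" and "b \<in> M"
  shows "SW N v b / SW N v a \<le>
    1 + real (card M) / 2 * ((real (card N) + real (Max (card ` D))) / real (Min (card ` D)) - 1)"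
proof -
  let ?n = "real (card N)" and ?min = "real (Min (card ` D))" and ?max = "real (Max (card ` D))"
  have "SW N v b / SW N v a
      \<le> 1 + real (card M) * ((won_voters b + ?n - won_voters a) / 2) / won_voters a"
    using won_voters_le_card[of a] won_voters_nonneg[of b]
    by (intro ratio_le_of_excess[OF card_M_pos won_voters_winner_pos won_voters_le_card_M_mult_SW
          SW_le_plus_half_voters[OF assms(2)]]) simp
  also have "\<dots> = 1 + real (card M) / 2 * ((won_voters b + ?n) / won_voters a - 1)"
    using won_voters_winner_pos by (simp add: field_simps)
  also have "(won_voters b + ?n) / won_voters a \<le> (?n + ?max) / ?min"
  proof -
    have "(won_voters b + ?n) * ?min \<le> (?n + ?max) * won_voters a"
      using won_voters_unweighted[OF assms] mult_left_mono[OF Min_card_districts_le_won_voters, of ?n]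
      by (simp add: algebra_simps)
    then show ?thesis
      using won_voters_winner_pos Min_card_districts_pos by (simp add: divide_simps)
  qed
  finally show ?thesis using card_M_pos by simp
qed

theorem ratio_symmetric:
  assumes sym: "\<forall>d\<in>D. w d = 1 \<and> real (card d) = real (card N) / real (card D)" and "b \<in> M"
  shows "SW N v b / SW N v a \<le> 1 + real (card M) * real (card D) / 2"
proof -
  have sizes: "real (f (card ` D)) = real (card N) / real (card D)"
    if "f (card ` D) \<in> card ` D" for f using that sym by auto
  have min: "real (Min (card ` D)) = real (card N) / real (card D)"
    and max: "real (Max (card ` D)) = real (card N) / real (card D)"
    using finite_D D_nonempty by (auto intro!: sizes Min_in Max_in)
  have "0 < card D" "0 < card N"
    using finite_D D_nonempty finite_N N_nonempty by (auto simp: card_gt_0_iff)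
  then have "(real (card N) + real (Max (card ` D))) / real (Min (card ` D)) - 1 = real (card D)"
    unfolding min max by (simp add: field_simps)
  then show ?thesis
    using ratio_unweighted[OF _ assms(2)] sym by simp
qed

end

theorem corollary1:
  fixes M :: "'a set" and N :: "'v set" and D :: "'v set set"
    and w :: "'v set \<Rightarrow> real" and v :: "'v \<Rightarrow> 'a \<Rightarrow> real"
    and loc :: "'v set \<Rightarrow> 'a" and a :: 'a
  assumes finM: "finite M" and m2: "card M \<ge> 2"
    and finN: "finite N" and Nne: "N \<noteq> {}"
    and part: "partition_on N D"
    and wpos: "\<forall>d\<in>D. w d > 0"
    and prof: "valid_profile M N v"
    and local: "\<forall>d\<in>D. RV_winner M d v (loc d)"
    and win: "election_winner M D w loc a"
  shows
    "((\<forall>d\<in>D. w d = 1 \<and> real (card d) = real (card N) / real (card D)) \<longrightarrow>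
        Max ((\<lambda>j. SW N v j) ` M) / SW N v a \<le> 1 + real (card M) * real (card D) / 2)
   \<and> ((\<forall>d\<in>D. w d = 1) \<longrightarrow>
        Max ((\<lambda>j. SW N v j) ` M) / SW N v a \<le>
          1 + real (card M) / 2 *
            ((real (card N) + real (Max (card ` D))) / real (Min (card ` D)) - 1))
   \<and> (Max ((\<lambda>j. SW N v j) ` M) / SW N v a \<le>
          1 + real (card M) * (real (card N) / real (Min (card ` D)) - 1))"
proof -
  interpret RV_district_election M N D w v loc a
    using finM finN Nne part wpos prof local win by unfold_locales
  have "Max ((\<lambda>j. SW N v j) ` M) \<in> (\<lambda>j. SW N v j) ` M"
    using finM winner_in_M by (intro Max_in) auto
  then obtain b where "b \<in> M" "Max ((\<lambda>j. SW N v j) ` M) = SW N v b" by blast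
  then show ?thesis
    using ratio_symmetric ratio_unweighted ratio_unrestricted by simp
qed

end
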